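(* Let $(H,\Lambda,\lambda)$ be an integral Hopf algebra in a strict symmetric monoidal category $\mathcal{C}$, with monoid $(\mu,\eta)$, comonoid $(\Delta,\varepsilon)$ and antipode $s$. Put $\beta:=\lambda\circ\mu$, $\gamma:=(s\otimes\mathrm{id}_H)\circ\Delta\circ\Lambda$ and $\gamma':=\Delta\circ\Lambda$. The following are equivalent: (i) $H$ is nondegenerate, i.e. $(\mathrm{id}_H\otimes\beta)\circ(\gamma\otimes\mathrm{id}_H)=\mathrm{id}_H=(\beta\otimes\mathrm{id}_H)\circ(\mathrm{id}_H\otimes\gamma)$; (ii) $\beta$ is a Frobenius form for the monoid $(H,\mu,\eta)$; (iii) $\gamma'$ is a Frobenius form for the comonoid $(H,\Delta,\varepsilon)$. Consequently, if $H$ is nondegenerate then $H$ admits a pre-Hopf-Frobenius algebra structure, i.e. there exist a comonoid $(\delta_g,\varepsilon_g)$ and a monoid $(\mu_r,\eta_r)$ on $H$ such that taking green monoid $(\mu,\eta)$, green comonoid $(\delta_g,\varepsilon_g)$, red monoid $(\mu_r,\eta_r)$, red comonoid $(\Delta,\varepsilon)$ and antipode $s$ gives a pre-Hopf-Frobenius algebra.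
   Context: $\mathcal{C}$ is a strict symmetric monoidal category with unit object $I$ and symmetry $\sigma$. A Hopf algebra $(H,\mu,\eta,\Delta,\varepsilon,s)$: an object $H$ with an associative unital monoid $(\mu\colon H\otimes H\to H,\eta\colon I\to H)$ and a coassociative counital comonoid $(\Delta\colon H\to H\otimes H,\varepsilon\colon H\to I)$ satisfying $\Delta\circ\mu=(\mu\otimes\mu)\circ(\mathrm{id}\otimes\sigma_{H,H}\otimes\mathrm{id})\circ(\Delta\otimes\Delta)$, $\Delta\circ\eta=\eta\otimes\eta$, $\varepsilon\circ\mu=\varepsilon\otimes\varepsilon$, $\varepsilon\circ\eta=\mathrm{id}_I$, and $s\colon H\to H$ with $\mu\circ(s\otimes\mathrm{id})\circ\Delta=\eta\circ\varepsilon=\mu\circ(\mathrm{id}\otimes s)\circ\Delta$. A left cointegral is a point $\Lambda\colon I\to H$ with $\mu\circ(\Lambda\otimes\mathrm{id}_H)=\Lambda\circ\varepsilon$; a right integral is a copoint $\lambda\colon H\to I$ with $(\mathrm{id}_H\otimes\lambda)\circ\Delta=\eta\circ\lambda$; $(H,\Lambda,\lambda)$ is an integral Hopf algebra if moreover $\lambda\circ\Lambda=\mathrm{id}_I$. A Frobenius form for a monoid $(F,\mu,\eta)$ is a morphism $\beta\colon F\otimes F\to I$ with $\beta\circ(\mu\otimes\mathrm{id}_F)=\beta\circ(\mathrm{id}_F\otimes\mu)$ admitting an inverse $\bar\beta\colon I\to F\otimes F$, meaning $(\mathrm{id}_F\otimes\beta)\circ(\bar\beta\otimes\mathrm{id}_F)=\mathrm{id}_F=(\beta\otimes\mathrm{id}_F)\circ(\mathrm{id}_F\otimes\bar\beta)$.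 Dually, a Frobenius form for a comonoid $(F,\Delta,\varepsilon)$ is a morphism $\gamma\colon I\to F\otimes F$ with $(\Delta\otimes\mathrm{id}_F)\circ\gamma=(\mathrm{id}_F\otimes\Delta)\circ\gamma$ admitting an inverse $\bar\gamma\colon F\otimes F\to I$ satisfying the same two equations with the roles of $\gamma,\bar\gamma$ as cap and cup. A Frobenius algebra is a monoid $(m,u)$ and comonoid $(d,c)$ on the same object with $(\mathrm{id}\otimes m)\circ(d\otimes\mathrm{id})=d\circ m=(m\otimes\mathrm{id})\circ(\mathrm{id}\otimes d)$. A pre-Hopf-Frobenius algebra consists of an object $H$ with a green monoid $(\mu_g,\eta_g)$, green comonoid $(\delta_g,\varepsilon_g)$, red monoid $(\mu_r,\eta_r)$, red comonoid $(\delta_r,\varepsilon_r)$ and an endomorphism $s$ such that $(\mu_g,\eta_g,\delta_g,\varepsilon_g)$ and $(\mu_r,\eta_r,\delta_r,\varepsilon_r)$ are Frobenius algebras and $(\mu_g,\eta_g,\delta_r,\varepsilon_r,s)$ is a Hopf algebra. *)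

theory Defs
  imports Main
begin

text \<open>A (strict symmetric monoidal) category is presented by its data: a predicate of
objects, a predicate of arrows, domain/codomain, composition (comp g f = g after f),
identities, tensor on objects and on arrows, the unit object and the symmetry.\<close>

record ('o, 'm) smc =
  Obj  :: "'o \<Rightarrow> bool"
  Arr  :: "'m \<Rightarrow> bool"
  Dom  :: "'m \<Rightarrow> 'o"
  Cod  :: "'m \<Rightarrow> 'o"
  Comp :: "'m \<Rightarrow> 'm \<Rightarrow> 'm"
  Id   :: "'o \<Rightarrow> 'm"
  OT   :: "'o \<Rightarrow> 'o \<Rightarrow> 'o"
  MT   :: "'m \<Rightarrow> 'm \<Rightarrow> 'm"
  Unit :: "'o"
  Sym  :: "'o \<Rightarrow> 'o \<Rightarrow> 'm"

definition hom :: "('o, 'm, 'z) smc_scheme \<Rightarrow> 'o \<Rightarrow> 'o \<Rightarrow> 'm \<Rightarrow> bool" where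
  "hom C A B f \<longleftrightarrow> Arr C f \<and> Dom C f = A \<and> Cod C f = B"

definition strict_smc :: "('o, 'm, 'z) smc_scheme \<Rightarrow> bool" where
  "strict_smc C \<longleftrightarrow>
    \<comment> \<open>category\<close>
    (\<forall>f. Arr C f \<longrightarrow> Obj C (Dom C f) \<and> Obj C (Cod C f)) \<and>
    (\<forall>A. Obj C A \<longrightarrow> hom C A A (Id C A)) \<and>
    (\<forall>A B D f g. hom C A B f \<longrightarrow> hom C B D g \<longrightarrow> hom C A D (Comp C g f)) \<and>
    (\<forall>A B f. hom C A B f \<longrightarrow> Comp C (Id C B) f = f \<and> Comp C f (Id C A) = f) \<and>
    (\<forall>A B D E f g h. hom C A B f \<longrightarrow> hom C B D g \<longrightarrow> hom C D E h \<longrightarrow>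
        Comp C h (Comp C g f) = Comp C (Comp C h g) f) \<and>
    \<comment> \<open>tensor bifunctor\<close>
    Obj C (Unit C) \<and>
    (\<forall>A B. Obj C A \<longrightarrow> Obj C B \<longrightarrow> Obj C (OT C A B)) \<and>
    (\<forall>A B D E f g. hom C A B f \<longrightarrow> hom C D E g \<longrightarrow> hom C (OT C A D) (OT C B E) (MT C f g)) \<and>
    (\<forall>A B. Obj C A \<longrightarrow> Obj C B \<longrightarrow> MT C (Id C A) (Id C B) = Id C (OT C A B)) \<and>
    (\<forall>A B D A' B' D' f g f' g'. hom C A B f \<longrightarrow> hom C B D g \<longrightarrow>
        hom C A' B' f' \<longrightarrow> hom C B' D' g' \<longrightarrow>
        MT C (Comp C g f) (Comp C g' f') = Comp C (MT C g g') (MT C f f')) \<and>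
    \<comment> \<open>strictness\<close>
    (\<forall>A B D. Obj C A \<longrightarrow> Obj C B \<longrightarrow> Obj C D \<longrightarrow> OT C (OT C A B) D = OT C A (OT C B D)) \<and>
    (\<forall>A. Obj C A \<longrightarrow> OT C (Unit C) A = A \<and> OT C A (Unit C) = A) \<and>
    (\<forall>f g h. Arr C f \<longrightarrow> Arr C g \<longrightarrow> Arr C h \<longrightarrow> MT C (MT C f g) h = MT C f (MT C g h)) \<and>
    (\<forall>f. Arr C f \<longrightarrow> MT C (Id C (Unit C)) f = f \<and> MT C f (Id C (Unit C)) = f) \<and>
    \<comment> \<open>symmetry\<close>
    (\<forall>A B. Obj C A \<longrightarrow> Obj C B \<longrightarrow> hom C (OT C A B) (OT C B A) (Sym C A B)) \<and>
    (\<forall>A B D E f g. hom C A B f \<longrightarrow> hom C D E g \<longrightarrow>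
        Comp C (Sym C B E) (MT C f g) = Comp C (MT C g f) (Sym C A D)) \<and>
    (\<forall>A B. Obj C A \<longrightarrow> Obj C B \<longrightarrow> Comp C (Sym C B A) (Sym C A B) = Id C (OT C A B)) \<and>
    (\<forall>A B D. Obj C A \<longrightarrow> Obj C B \<longrightarrow> Obj C D \<longrightarrow>
        Sym C A (OT C B D) = Comp C (MT C (Id C B) (Sym C A D)) (MT C (Sym C A B) (Id C D)))"

definition is_monoid :: "('o, 'm, 'z) smc_scheme \<Rightarrow> 'o \<Rightarrow> 'm \<Rightarrow> 'm \<Rightarrow> bool" where
  "is_monoid C H m u \<longleftrightarrow> Obj C H \<and>
    hom C (OT C H H) H m \<and> hom C (Unit C) H u \<and>
    Comp C m (MT C m (Id C H)) = Comp C m (MT C (Id C H) m) \<and>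
    Comp C m (MT C u (Id C H)) = Id C H \<and>
    Comp C m (MT C (Id C H) u) = Id C H"

definition is_comonoid :: "('o, 'm, 'z) smc_scheme \<Rightarrow> 'o \<Rightarrow> 'm \<Rightarrow> 'm \<Rightarrow> bool" where
  "is_comonoid C H d e \<longleftrightarrow> Obj C H \<and>
    hom C H (OT C H H) d \<and> hom C H (Unit C) e \<and>
    Comp C (MT C d (Id C H)) d = Comp C (MT C (Id C H) d) d \<and>
    Comp C (MT C e (Id C H)) d = Id C H \<and>
    Comp C (MT C (Id C H) e) d = Id C H"

definition is_hopf :: "('o, 'm, 'z) smc_scheme \<Rightarrow> 'o \<Rightarrow> 'm \<Rightarrow> 'm \<Rightarrow> 'm \<Rightarrow> 'm \<Rightarrow> 'm \<Rightarrow> bool" where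
  "is_hopf C H mu eta delta eps s \<longleftrightarrow>
    is_monoid C H mu eta \<and> is_comonoid C H delta eps \<and>
    Comp C delta mu =
      Comp C (MT C mu mu) (Comp C (MT C (Id C H) (MT C (Sym C H H) (Id C H))) (MT C delta delta)) \<and>
    Comp C delta eta = MT C eta eta \<and>
    Comp C eps mu = MT C eps eps \<and>
    Comp C eps eta = Id C (Unit C) \<and>
    hom C H H s \<and>
    Comp C mu (Comp C (MT C s (Id C H)) delta) = Comp C eta eps \<and>
    Comp C mu (Comp C (MT C (Id C H) s) delta) = Comp C eta eps"

definition is_left_cointegral :: "('o, 'm, 'z) smc_scheme \<Rightarrow> 'o \<Rightarrow> 'm \<Rightarrow> 'm \<Rightarrow> 'm \<Rightarrow> bool" where
  "is_left_cointegral C H mu eps Lam \<longleftrightarrow> hom C (Unit C) H Lam \<and>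
    Comp C mu (MT C Lam (Id C H)) = Comp C Lam eps"

definition is_right_integral :: "('o, 'm, 'z) smc_scheme \<Rightarrow> 'o \<Rightarrow> 'm \<Rightarrow> 'm \<Rightarrow> 'm \<Rightarrow> bool" where
  "is_right_integral C H eta delta lam \<longleftrightarrow> hom C H (Unit C) lam \<and>
    Comp C (MT C (Id C H) lam) delta = Comp C eta lam"

definition is_integral_hopf ::
  "('o, 'm, 'z) smc_scheme \<Rightarrow> 'o \<Rightarrow> 'm \<Rightarrow> 'm \<Rightarrow> 'm \<Rightarrow> 'm \<Rightarrow> 'm \<Rightarrow> 'm \<Rightarrow> 'm \<Rightarrow> bool" where
  "is_integral_hopf C H mu eta delta eps s Lam lam \<longleftrightarrow>
    is_hopf C H mu eta delta eps s \<and>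
    is_left_cointegral C H mu eps Lam \<and> is_right_integral C H eta delta lam \<and>
    Comp C lam Lam = Id C (Unit C)"

definition monoid_frobenius_form :: "('o, 'm, 'z) smc_scheme \<Rightarrow> 'o \<Rightarrow> 'm \<Rightarrow> 'm \<Rightarrow> 'm \<Rightarrow> bool" where
  "monoid_frobenius_form C F m u \<beta> \<longleftrightarrow> hom C (OT C F F) (Unit C) \<beta> \<and>
    Comp C \<beta> (MT C m (Id C F)) = Comp C \<beta> (MT C (Id C F) m) \<and>
    (\<exists>\<beta>'. hom C (Unit C) (OT C F F) \<beta>' \<and>
       Comp C (MT C (Id C F) \<beta>) (MT C \<beta>' (Id C F)) = Id C F \<and>
       Comp C (MT C \<beta> (Id C F)) (MT C (Id C F) \<beta>') = Id C F)"

definition comonoid_frobenius_form :: "('o, 'm, 'z) smc_scheme \<Rightarrow> 'o \<Rightarrow> 'm \<Rightarrow> 'm \<Rightarrow> 'm \<Rightarrow> bool" where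
  "comonoid_frobenius_form C F d e \<gamma> \<longleftrightarrow> hom C (Unit C) (OT C F F) \<gamma> \<and>
    Comp C (MT C d (Id C F)) \<gamma> = Comp C (MT C (Id C F) d) \<gamma> \<and>
    (\<exists>\<gamma>'. hom C (OT C F F) (Unit C) \<gamma>' \<and>
       Comp C (MT C (Id C F) \<gamma>') (MT C \<gamma> (Id C F)) = Id C F \<and>
       Comp C (MT C \<gamma>' (Id C F)) (MT C (Id C F) \<gamma>) = Id C F)"

definition is_frobenius_algebra :: "('o, 'm, 'z) smc_scheme \<Rightarrow> 'o \<Rightarrow> 'm \<Rightarrow> 'm \<Rightarrow> 'm \<Rightarrow> 'm \<Rightarrow> bool" where
  "is_frobenius_algebra C H m u d c \<longleftrightarrow> is_monoid C H m u \<and> is_comonoid C H d c \<and>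
    Comp C (MT C (Id C H) m) (MT C d (Id C H)) = Comp C d m \<and>
    Comp C d m = Comp C (MT C m (Id C H)) (MT C (Id C H) d)"

definition is_pre_hopf_frobenius ::
  "('o, 'm, 'z) smc_scheme \<Rightarrow> 'o \<Rightarrow> 'm \<Rightarrow> 'm \<Rightarrow> 'm \<Rightarrow> 'm \<Rightarrow> 'm \<Rightarrow> 'm \<Rightarrow> 'm \<Rightarrow> 'm \<Rightarrow> 'm \<Rightarrow> bool" where
  "is_pre_hopf_frobenius C H mu_g eta_g delta_g eps_g mu_r eta_r delta_r eps_r s \<longleftrightarrow>
    is_frobenius_algebra C H mu_g eta_g delta_g eps_g \<and>
    is_frobenius_algebra C H mu_r eta_r delta_r eps_r \<and>
    is_hopf C H mu_g eta_g delta_r eps_r s"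

end

theory Submission
  imports Defs
begin

(* In an integral Hopf algebra the pairing beta = lam mu and the copairing gamma = (s (x) 1) Delta Lam
   always satisfy one zigzag identity, (1 (x) beta)(gamma (x) 1) = 1: in Sweedler notation
   S(Lam1) lam(Lam2 x) = S(Lam1) Lam2 x1 lam(Lam3 x2) = x1 lam(Lam x2) = x, using that lam is a right
   integral, the bialgebra law, the antipode and that Lam is a left cointegral.  The same computation
   in the opposite category, which exchanges mu with Delta and Lam with lam, gives
   (1 (x) beta')(gamma' (x) 1) = 1 for beta' = beta (1 (x) s) and gamma' = Delta Lam, and sliding the
   antipode along a wire turns the remaining zigzag identity for (beta', gamma') into the one for
   (beta, gamma).  As a copairing satisfying one zigzag identity with a pairing equals every copairing
   satisfying the other, beta is a Frobenius form exactly when (beta, gamma) satisfies both zigzags,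
   exactly when gamma' is a Frobenius form.  A Frobenius form with inverse bb yields a Frobenius
   algebra with comultiplication (mu (x) 1)(1 (x) bb) and counit beta (eta (x) 1); applied to beta,
   and in the opposite category to gamma', this gives the green and the red Frobenius structure. *)

definition zigzag :: "('o, 'm, 'z) smc_scheme \<Rightarrow> 'o \<Rightarrow> 'm \<Rightarrow> 'm \<Rightarrow> bool" where
  "zigzag C X e d \<longleftrightarrow>
     Comp C (MT C (Id C X) e) (MT C d (Id C X)) = Id C X \<and>
     Comp C (MT C e (Id C X)) (MT C (Id C X) d) = Id C X"

locale strict_symmetric_monoidal =
  fixes C :: "('o, 'm, 'z) smc_scheme"
  assumes strict_smc: "strict_smc C"
begin

abbreviation cat_comp (infixr "\<cdot>" 65) where "g \<cdot> f \<equiv> Comp C g f"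
abbreviation tensor_arr (infixr "\<otimes>" 70) where "f \<otimes> g \<equiv> MT C f g"

lemma obj_Dom_Cod [rule_format]: "\<forall>f. Arr C f \<longrightarrow> Obj C (Dom C f) \<and> Obj C (Cod C f)"
  and hom_Id [rule_format]: "\<forall>A. Obj C A \<longrightarrow> hom C A A (Id C A)"
  and hom_comp [rule_format]: "\<forall>A B D f g. hom C A B f \<longrightarrow> hom C B D g \<longrightarrow> hom C A D (g \<cdot> f)"
  and comp_Id_hom [rule_format]: "\<forall>A B f. hom C A B f \<longrightarrow> Id C B \<cdot> f = f \<and> f \<cdot> Id C A = f"
  and comp_assoc_hom [rule_format]: "\<forall>A B D E f g h. hom C A B f \<longrightarrow> hom C B D g \<longrightarrow> hom C D E h \<longrightarrow>
        h \<cdot> g \<cdot> f = (h \<cdot> g) \<cdot> f"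
  and obj_Unit [simp]: "Obj C (Unit C)"
  and obj_OT [simp, rule_format]: "\<forall>A B. Obj C A \<longrightarrow> Obj C B \<longrightarrow> Obj C (OT C A B)"
  and hom_tensor [rule_format]: "\<forall>A B D E f g. hom C A B f \<longrightarrow> hom C D E g \<longrightarrow>
        hom C (OT C A D) (OT C B E) (f \<otimes> g)"
  and tensor_Id [rule_format]: "\<forall>A B. Obj C A \<longrightarrow> Obj C B \<longrightarrow> Id C A \<otimes> Id C B = Id C (OT C A B)"
  and interchange_hom [rule_format]: "\<forall>A B D A' B' D' f g f' g'. hom C A B f \<longrightarrow> hom C B D g \<longrightarrow>
        hom C A' B' f' \<longrightarrow> hom C B' D' g' \<longrightarrow> (g \<cdot> f) \<otimes> (g' \<cdot> f') = (g \<otimes> g') \<cdot> (f \<otimes> f')"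
  and OT_assoc [simp, rule_format]: "\<forall>A B D. Obj C A \<longrightarrow> Obj C B \<longrightarrow> Obj C D \<longrightarrow>
        OT C (OT C A B) D = OT C A (OT C B D)"
  and OT_Unit [simp, rule_format]: "\<forall>A. Obj C A \<longrightarrow> OT C (Unit C) A = A \<and> OT C A (Unit C) = A"
  and tensor_assoc [rule_format]: "\<forall>f g h. Arr C f \<longrightarrow> Arr C g \<longrightarrow> Arr C h \<longrightarrow>
        (f \<otimes> g) \<otimes> h = f \<otimes> g \<otimes> h"
  and tensor_Unit [simp, rule_format]: "\<forall>f. Arr C f \<longrightarrow> Id C (Unit C) \<otimes> f = f \<and> f \<otimes> Id C (Unit C) = f"
  and hom_Sym [rule_format]: "\<forall>A B. Obj C A \<longrightarrow> Obj C B \<longrightarrow> hom C (OT C A B) (OT C B A) (Sym C A B)"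
  and Sym_natural [rule_format]: "\<forall>A B D E f g. hom C A B f \<longrightarrow> hom C D E g \<longrightarrow>
        Sym C B E \<cdot> (f \<otimes> g) = (g \<otimes> f) \<cdot> Sym C A D"
  and Sym_inverse [rule_format]: "\<forall>A B. Obj C A \<longrightarrow> Obj C B \<longrightarrow> Sym C B A \<cdot> Sym C A B = Id C (OT C A B)"
  and Sym_hexagon [rule_format]: "\<forall>A B D. Obj C A \<longrightarrow> Obj C B \<longrightarrow> Obj C D \<longrightarrow>
        Sym C A (OT C B D) = (Id C B \<otimes> Sym C A D) \<cdot> (Sym C A B \<otimes> Id C D)"
  by (insert strict_smc, unfold strict_smc_def) (elim conjE; assumption)+

lemma obj_Dom [simp]: "Arr C f \<Longrightarrow> Obj C (Dom C f)"
  and obj_Cod [simp]: "Arr C f \<Longrightarrow> Obj C (Cod C f)"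
  by (simp_all add: obj_Dom_Cod)

lemma arr_Id [simp]: "Obj C A \<Longrightarrow> Arr C (Id C A)"
  and dom_Id [simp]: "Obj C A \<Longrightarrow> Dom C (Id C A) = A"
  and cod_Id [simp]: "Obj C A \<Longrightarrow> Cod C (Id C A) = A"
  using hom_Id by (simp_all add: hom_def)

lemma arr_comp [simp]: "Arr C f \<Longrightarrow> Arr C g \<Longrightarrow> Dom C g = Cod C f \<Longrightarrow> Arr C (g \<cdot> f)"
  and dom_comp [simp]: "Arr C f \<Longrightarrow> Arr C g \<Longrightarrow> Dom C g = Cod C f \<Longrightarrow> Dom C (g \<cdot> f) = Dom C f"
  and cod_comp [simp]: "Arr C f \<Longrightarrow> Arr C g \<Longrightarrow> Dom C g = Cod C f \<Longrightarrow> Cod C (g \<cdot> f) = Cod C g"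
  using hom_comp[of "Dom C f" "Cod C f" f "Cod C g" g] by (simp_all add: hom_def)

lemma arr_tensor [simp]: "Arr C f \<Longrightarrow> Arr C g \<Longrightarrow> Arr C (f \<otimes> g)"
  and dom_tensor [simp]: "Arr C f \<Longrightarrow> Arr C g \<Longrightarrow> Dom C (f \<otimes> g) = OT C (Dom C f) (Dom C g)"
  and cod_tensor [simp]: "Arr C f \<Longrightarrow> Arr C g \<Longrightarrow> Cod C (f \<otimes> g) = OT C (Cod C f) (Cod C g)"
  using hom_tensor[of "Dom C f" "Cod C f" f "Dom C g" "Cod C g" g] by (simp_all add: hom_def)

lemma comp_assoc:
  "Arr C f \<Longrightarrow> Arr C g \<Longrightarrow> Arr C h \<Longrightarrow> Dom C g = Cod C f \<Longrightarrow> Dom C h = Cod C g \<Longrightarrow>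
   (h \<cdot> g) \<cdot> f = h \<cdot> g \<cdot> f"
  using comp_assoc_hom[of "Dom C f" "Cod C f" f "Cod C g" g "Cod C h" h] by (simp add: hom_def)

lemma comp_Id_left [simp]: "Arr C f \<Longrightarrow> Cod C f = A \<Longrightarrow> Id C A \<cdot> f = f"
  and comp_Id_right [simp]: "Arr C f \<Longrightarrow> Dom C f = A \<Longrightarrow> f \<cdot> Id C A = f"
  using comp_Id_hom[of "Dom C f" "Cod C f" f] by (simp_all add: hom_def)

lemma interchange:
  "Arr C f \<Longrightarrow> Arr C g \<Longrightarrow> Arr C f' \<Longrightarrow> Arr C g' \<Longrightarrow> Dom C g = Cod C f \<Longrightarrow> Dom C g' = Cod C f' \<Longrightarrow>
   (g \<otimes> g') \<cdot> (f \<otimes> f') = (g \<cdot> f) \<otimes> (g' \<cdot> f')"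
  using interchange_hom[of "Dom C f" "Cod C f" f "Cod C g" g "Dom C f'" "Cod C f'" f' "Cod C g'" g']
  by (simp add: hom_def)

lemma Sym_Unit_left: assumes A: "Obj C A" shows "Sym C (Unit C) A = Id C A"
proof -
  let ?x = "Sym C A (Unit C)" and ?y = "Sym C (Unit C) A"
  have x: "Arr C ?x" "Dom C ?x = A" "Cod C ?x = A" and y: "Arr C ?y" "Dom C ?y = A" "Cod C ?y = A"
    using hom_Sym[OF A obj_Unit] hom_Sym[OF obj_Unit A] A by (simp_all add: hom_def)
  have "?x = Sym C A (OT C (Unit C) (Unit C))" by simp
  then have idem: "?x = ?x \<cdot> ?x"
    using Sym_hexagon[OF A obj_Unit obj_Unit] x by simp
  have inv: "?y \<cdot> ?x = Id C A" using Sym_inverse[OF A obj_Unit] A by simp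
  have "?x = (?y \<cdot> ?x) \<cdot> ?x" using inv x by simp
  also have "\<dots> = Id C A" using comp_assoc[of ?x ?x ?y] x y idem inv by simp
  finally show ?thesis using inv x y by simp
qed

lemma Sym_point:
  "Arr C p \<Longrightarrow> Dom C p = Unit C \<Longrightarrow> Cod C p = A \<Longrightarrow> Obj C B \<Longrightarrow>
   Sym C A B \<cdot> (p \<otimes> Id C B) = Id C B \<otimes> p"
  using Sym_natural[of "Unit C" A p B B "Id C B"] Sym_Unit_left[of B] by (simp add: hom_def)

lemma point_tensor_point:
  assumes "Arr C p" "Dom C p = Unit C" "Cod C p = A" "Arr C q" "Dom C q = Unit C" "Cod C q = B"
  shows "(Id C A \<otimes> q) \<cdot> p = p \<otimes> q" "(p \<otimes> Id C B) \<cdot> q = p \<otimes> q"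
  using assms interchange[of "Id C (Unit C)" p q "Id C B"] interchange[of p "Id C A" "Id C (Unit C)" q]
    obj_Cod[of p] obj_Cod[of q]
  by simp_all

lemma precompose2:
  "g \<cdot> f = h \<Longrightarrow> Arr C f \<Longrightarrow> Arr C g \<Longrightarrow> Arr C k \<Longrightarrow>
   Dom C g = Cod C f \<Longrightarrow> Dom C f = Cod C k \<Longrightarrow> g \<cdot> f \<cdot> k = h \<cdot> k"
  by (simp add: comp_assoc[symmetric])

lemma precompose3:
  "g \<cdot> f \<cdot> e = h \<Longrightarrow> Arr C e \<Longrightarrow> Arr C f \<Longrightarrow> Arr C g \<Longrightarrow> Arr C k \<Longrightarrow>
   Dom C g = Cod C f \<Longrightarrow> Dom C f = Cod C e \<Longrightarrow> Dom C e = Cod C k \<Longrightarrow> g \<cdot> f \<cdot> e \<cdot> k = h \<cdot> k"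
  by (simp add: comp_assoc[symmetric])

lemma precompose4:
  "g \<cdot> f \<cdot> e \<cdot> d = h \<Longrightarrow> Arr C d \<Longrightarrow> Arr C e \<Longrightarrow> Arr C f \<Longrightarrow> Arr C g \<Longrightarrow> Arr C k \<Longrightarrow>
   Dom C g = Cod C f \<Longrightarrow> Dom C f = Cod C e \<Longrightarrow> Dom C e = Cod C d \<Longrightarrow> Dom C d = Cod C k \<Longrightarrow>
   g \<cdot> f \<cdot> e \<cdot> d \<cdot> k = h \<cdot> k"
  by (simp add: comp_assoc[symmetric])

lemma interchange_split_left:
  "Arr C f1 \<Longrightarrow> Arr C f2 \<Longrightarrow> Arr C f3 \<Longrightarrow> Arr C g \<Longrightarrow> Arr C g' \<Longrightarrow>
   Dom C g = OT C (Cod C f1) (Cod C f2) \<Longrightarrow> Dom C g' = Cod C f3 \<Longrightarrow>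
   (g \<otimes> g') \<cdot> (f1 \<otimes> f2 \<otimes> f3) = (g \<cdot> (f1 \<otimes> f2)) \<otimes> (g' \<cdot> f3)"
  by (simp add: tensor_assoc[symmetric] interchange)

lemma interchange_split_right:
  "Arr C g1 \<Longrightarrow> Arr C g2 \<Longrightarrow> Arr C g3 \<Longrightarrow> Arr C f \<Longrightarrow> Arr C f' \<Longrightarrow>
   Cod C f = OT C (Dom C g1) (Dom C g2) \<Longrightarrow> Cod C f' = Dom C g3 \<Longrightarrow>
   (g1 \<otimes> g2 \<otimes> g3) \<cdot> (f \<otimes> f') = ((g1 \<otimes> g2) \<cdot> f) \<otimes> (g3 \<cdot> f')"
  by (simp add: tensor_assoc[symmetric] interchange)

lemma point_tensor_comp:
  "Arr C p \<Longrightarrow> Arr C g \<Longrightarrow> Arr C f \<Longrightarrow> Dom C p = Unit C \<Longrightarrow> Dom C g = Cod C f \<Longrightarrow>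
   (p \<otimes> g) \<cdot> f = p \<otimes> (g \<cdot> f)"
  using interchange[of "Id C (Unit C)" p f g] by simp

lemma tensor_point_comp:
  "Arr C p \<Longrightarrow> Arr C g \<Longrightarrow> Arr C f \<Longrightarrow> Dom C p = Unit C \<Longrightarrow> Dom C g = Cod C f \<Longrightarrow>
   (g \<otimes> p) \<cdot> f = (g \<cdot> f) \<otimes> p"
  using interchange[of f g "Id C (Unit C)" p] by simp

lemma tensor_copoint_comp:
  "Arr C f \<Longrightarrow> Arr C g \<Longrightarrow> Arr C w \<Longrightarrow> Dom C f = Cod C g \<Longrightarrow> Cod C w = Unit C \<Longrightarrow>
   (f \<cdot> g) \<otimes> w = f \<cdot> (g \<otimes> w)"
  using interchange[of g f w "Id C (Unit C)"] by simp

lemma comp_tensor_Id_left: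
  "Arr C f \<Longrightarrow> Cod C f = OT C A B \<Longrightarrow> Obj C A \<Longrightarrow> Obj C B \<Longrightarrow> (Id C A \<otimes> Id C B) \<cdot> f = f"
  and comp_tensor_Id_right:
  "Arr C f \<Longrightarrow> Dom C f = OT C A B \<Longrightarrow> Obj C A \<Longrightarrow> Obj C B \<Longrightarrow> f \<cdot> (Id C A \<otimes> Id C B) = f"
  by (simp_all add: tensor_Id)

(* Composites and tensors are kept right-nested, so a rule
   rewriting two adjacent layers fires inside a longer composite only in its precomposed form
   g . f . k = h . k.  Tensors of identities are deliberately not merged into one identity: that
   would destroy the alignment of tensor factors which the interchange rules rely on. *)
lemmas monoidal_simps = comp_assoc tensor_assoc interchange interchange[THEN precompose2]
  interchange_split_left interchange_split_left[THEN precompose2] interchange_split_right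
  point_tensor_comp tensor_point_comp tensor_copoint_comp comp_tensor_Id_left comp_tensor_Id_right

lemma zigzag_unique:
  assumes X: "Obj C X" and e: "hom C (OT C X X) (Unit C) e"
    and a: "hom C (Unit C) (OT C X X) a" and b: "hom C (Unit C) (OT C X X) b"
    and left: "(Id C X \<otimes> e) \<cdot> (a \<otimes> Id C X) = Id C X"
    and right: "(e \<otimes> Id C X) \<cdot> (Id C X \<otimes> b) = Id C X"
  shows "a = b"
proof -
  let ?i = "Id C X" and ?ii = "Id C (OT C X X)"
  have ty: "Arr C a" "Dom C a = Unit C" "Cod C a = OT C X X" "Arr C b" "Dom C b = Unit C"
    "Cod C b = OT C X X" "Arr C e" "Dom C e = OT C X X" "Cod C e = Unit C"
    using a b e by (simp_all add: hom_def)
  have "a = (?i \<otimes> ((e \<otimes> ?i) \<cdot> (?i \<otimes> b))) \<cdot> a"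
    using X ty by (simp add: right tensor_Id)
  also have "\<dots> = (?i \<otimes> e \<otimes> ?i) \<cdot> (?ii \<otimes> b) \<cdot> a"
    using X ty by (simp add: monoidal_simps tensor_Id[symmetric])
  also have "\<dots> = (?i \<otimes> e \<otimes> ?i) \<cdot> (a \<otimes> ?ii) \<cdot> b"
    using X ty by (simp add: point_tensor_point)
  also have "\<dots> = (((?i \<otimes> e) \<cdot> (a \<otimes> ?i)) \<otimes> ?i) \<cdot> b"
    using X ty by (simp add: tensor_assoc[symmetric] interchange[THEN precompose2] tensor_Id[symmetric])
  also have "\<dots> = b"
    using X ty by (simp add: left tensor_Id)
  finally show ?thesis .
qed

end

definition dual :: "('o, 'm, 'z) smc_scheme \<Rightarrow> ('o, 'm) smc" where
  "dual C = \<lparr>Obj = Obj C, Arr = Arr C, Dom = Cod C, Cod = Dom C,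
     Comp = (\<lambda>g f. Comp C f g), Id = Id C, OT = (\<lambda>A B. OT C B A), MT = (\<lambda>f g. MT C g f),
     Unit = Unit C, Sym = Sym C\<rparr>"

lemma dual_simps [simp]:
  "Obj (dual C) = Obj C" "Arr (dual C) = Arr C" "Dom (dual C) = Cod C" "Cod (dual C) = Dom C"
  "Comp (dual C) g f = Comp C f g" "Id (dual C) = Id C" "OT (dual C) A B = OT C B A"
  "MT (dual C) f g = MT C g f" "Unit (dual C) = Unit C" "Sym (dual C) = Sym C"
  by (simp_all add: dual_def)

lemma hom_dual [simp]: "hom (dual C) A B f = hom C B A f"
  by (auto simp: hom_def)

lemma is_monoid_dual: "is_monoid (dual C) X d e \<longleftrightarrow> is_comonoid C X d e"
  unfolding is_monoid_def is_comonoid_def by auto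

lemma is_comonoid_dual: "is_comonoid (dual C) X m u \<longleftrightarrow> is_monoid C X m u"
  unfolding is_monoid_def is_comonoid_def by auto

lemma monoid_frobenius_form_dual:
  "monoid_frobenius_form (dual C) X d e \<gamma> \<longleftrightarrow> comonoid_frobenius_form C X d e \<gamma>"
  unfolding monoid_frobenius_form_def comonoid_frobenius_form_def by auto

lemma is_frobenius_algebra_dual:
  "is_frobenius_algebra (dual C) X d e m u \<longleftrightarrow> is_frobenius_algebra C X m u d e"
  unfolding is_frobenius_algebra_def is_monoid_dual is_comonoid_dual by auto

context strict_symmetric_monoidal
begin

lemma strict_smc_dual: "strict_smc (dual C)"
  unfolding strict_smc_def dual_simps hom_dual
  by (intro conjI allI impI)
    (simp_all add: hom_comp hom_Id comp_Id_hom hom_tensor tensor_Id hom_Sym Sym_inverse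
      comp_assoc_hom interchange_hom tensor_assoc Sym_natural Sym_hexagon)

lemma zigzag_unique_dual:
  assumes "Obj C X" "hom C (Unit C) (OT C X X) d"
    "hom C (OT C X X) (Unit C) a" "hom C (OT C X X) (Unit C) b"
    "(Id C X \<otimes> a) \<cdot> (d \<otimes> Id C X) = Id C X"
    "(b \<otimes> Id C X) \<cdot> (Id C X \<otimes> d) = Id C X"
  shows "a = b"
  using strict_symmetric_monoidal.zigzag_unique[of "dual C" X d a b] strict_smc_dual assms
  by (simp add: strict_symmetric_monoidal_def)

lemma is_integral_hopf_dual:
  assumes "is_integral_hopf C H mu eta delta eps s Lam lam"
  shows "is_integral_hopf (dual C) H delta eps mu eta s lam Lam"
proof -
  have ty: "hom C (OT C H H) H mu" "hom C (Unit C) H eta" "hom C H (OT C H H) delta" "hom C H H s"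
    using assms unfolding is_integral_hopf_def is_hopf_def is_monoid_def is_comonoid_def by blast+
  then have "Obj C H" using obj_Dom[of s] by (simp add: hom_def)
  then show ?thesis
    using assms ty hom_Sym[of H H]
    unfolding is_integral_hopf_def is_hopf_def is_monoid_def is_comonoid_def is_left_cointegral_def
      is_right_integral_def
    by (auto simp: hom_def comp_assoc tensor_assoc)
qed

end

locale frobenius_form = strict_symmetric_monoidal +
  fixes X m u be bb
  assumes monoid: "is_monoid C X m u"
    and hom_pairing: "hom C (OT C X X) (Unit C) be"
    and pairing_invariant: "be \<cdot> (m \<otimes> Id C X) = be \<cdot> (Id C X \<otimes> m)"
    and hom_copairing: "hom C (Unit C) (OT C X X) bb"
    and zigzag: "zigzag C X be bb"
begin

abbreviation i where "i \<equiv> Id C X"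

definition comult where "comult = (m \<otimes> i) \<cdot> (i \<otimes> bb)"
definition counit where "counit = be \<cdot> (u \<otimes> i)"

lemma obj_X [simp]: "Obj C X"
  using monoid unfolding is_monoid_def by blast

lemma frobenius_typing [simp]:
  "Arr C m" "Dom C m = OT C X X" "Cod C m = X"
  "Arr C u" "Dom C u = Unit C" "Cod C u = X"
  "Arr C be" "Dom C be = OT C X X" "Cod C be = Unit C"
  "Arr C bb" "Dom C bb = Unit C" "Cod C bb = OT C X X"
  using monoid hom_pairing hom_copairing unfolding is_monoid_def by (simp_all add: hom_def)

lemma comult_counit_typing [simp]:
  "Arr C comult" "Dom C comult = X" "Cod C comult = OT C X X"
  "Arr C counit" "Dom C counit = X" "Cod C counit = Unit C"
  by (simp_all add: comult_def counit_def)

lemma m_assoc: "m \<cdot> (m \<otimes> i) = m \<cdot> (i \<otimes> m)"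
  and m_unit_left: "m \<cdot> (u \<otimes> i) = i"
  using monoid unfolding is_monoid_def by blast+

lemma zigzag_left: "(i \<otimes> be) \<cdot> (bb \<otimes> i) = i"
  and zigzag_right: "(be \<otimes> i) \<cdot> (i \<otimes> bb) = i"
  using zigzag unfolding zigzag_def by blast+

lemma copairing_balanced: "(m \<otimes> i) \<cdot> (i \<otimes> bb) = (i \<otimes> m) \<cdot> (bb \<otimes> i)"
proof -
  have slide_m: "(bb \<otimes> i \<otimes> i) \<cdot> (m \<otimes> i) = (i \<otimes> i \<otimes> m \<otimes> i) \<cdot> (bb \<otimes> i \<otimes> i \<otimes> i)"
    by (simp add: monoidal_simps)
  have invariant: "(i \<otimes> be \<otimes> i) \<cdot> (i \<otimes> i \<otimes> m \<otimes> i) = (i \<otimes> be \<otimes> i) \<cdot> (i \<otimes> m \<otimes> i \<otimes> i)"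
    by (simp add: monoidal_simps pairing_invariant)
  have slide_bb: "(bb \<otimes> i \<otimes> i \<otimes> i) \<cdot> (i \<otimes> bb) = (i \<otimes> i \<otimes> i \<otimes> bb) \<cdot> (bb \<otimes> i)"
    by (simp add: monoidal_simps)
  have slide_m': "(i \<otimes> m \<otimes> i \<otimes> i) \<cdot> (i \<otimes> i \<otimes> i \<otimes> bb) = (i \<otimes> i \<otimes> bb) \<cdot> (i \<otimes> m)"
    by (simp add: monoidal_simps)
  have snake: "(i \<otimes> be \<otimes> i) \<cdot> (i \<otimes> i \<otimes> bb) = i \<otimes> i"
    by (simp add: monoidal_simps zigzag_right)
  have "(m \<otimes> i) \<cdot> (i \<otimes> bb) = (((i \<otimes> be) \<cdot> (bb \<otimes> i)) \<otimes> i) \<cdot> (m \<otimes> i) \<cdot> (i \<otimes> bb)"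
    by (simp add: zigzag_left comp_tensor_Id_left)
  also have "\<dots> = (i \<otimes> be \<otimes> i) \<cdot> (bb \<otimes> i \<otimes> i) \<cdot> (m \<otimes> i) \<cdot> (i \<otimes> bb)"
    by (simp add: comp_assoc tensor_assoc[symmetric] interchange[THEN precompose2])
  also have "\<dots> = (i \<otimes> be \<otimes> i) \<cdot> (i \<otimes> m \<otimes> i \<otimes> i) \<cdot> (bb \<otimes> i \<otimes> i \<otimes> i) \<cdot> (i \<otimes> bb)"
    by (simp add: comp_assoc slide_m[THEN precompose2] invariant[THEN precompose2])
  also have "\<dots> = (i \<otimes> be \<otimes> i) \<cdot> (i \<otimes> i \<otimes> bb) \<cdot> (i \<otimes> m) \<cdot> (bb \<otimes> i)"
    by (simp add: comp_assoc slide_bb slide_m'[THEN precompose2])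
  also have "\<dots> = (i \<otimes> m) \<cdot> (bb \<otimes> i)"
    by (simp add: comp_assoc snake[THEN precompose2] comp_tensor_Id_left)
  finally show ?thesis .
qed

lemma counit_mult: "counit \<cdot> m = be"
proof -
  have "counit \<cdot> m = be \<cdot> (i \<otimes> m) \<cdot> (u \<otimes> i \<otimes> i)"
    by (simp add: counit_def monoidal_simps)
  also have "\<dots> = be \<cdot> (m \<otimes> i) \<cdot> (u \<otimes> i \<otimes> i)"
    by (simp add: comp_assoc pairing_invariant[THEN precompose2])
  also have "\<dots> = be"
    by (simp add: monoidal_simps m_unit_left)
  finally show ?thesis .
qed

lemma comult_mult_left: "comult \<cdot> m = (m \<otimes> i) \<cdot> (i \<otimes> comult)"
proof -
  have assoc: "(m \<otimes> i) \<cdot> (m \<otimes> i \<otimes> i) = (m \<otimes> i) \<cdot> (i \<otimes> m \<otimes> i)"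
    by (simp add: monoidal_simps m_assoc)
  have "comult \<cdot> m = (m \<otimes> i) \<cdot> (m \<otimes> i \<otimes> i) \<cdot> (i \<otimes> i \<otimes> bb)"
    by (simp add: comult_def monoidal_simps)
  also have "\<dots> = (m \<otimes> i) \<cdot> (i \<otimes> m \<otimes> i) \<cdot> (i \<otimes> i \<otimes> bb)"
    by (simp add: comp_assoc assoc[THEN precompose2])
  also have "\<dots> = (m \<otimes> i) \<cdot> (i \<otimes> comult)"
    by (simp add: comult_def monoidal_simps)
  finally show ?thesis .
qed

lemma comult_mult_right: "(i \<otimes> m) \<cdot> (comult \<otimes> i) = comult \<cdot> m"
proof -
  have assoc: "(i \<otimes> m) \<cdot> (i \<otimes> i \<otimes> m) = (i \<otimes> m) \<cdot> (i \<otimes> m \<otimes> i)"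
    by (simp add: monoidal_simps m_assoc)
  have "comult \<cdot> m = (i \<otimes> m) \<cdot> (i \<otimes> i \<otimes> m) \<cdot> (bb \<otimes> i \<otimes> i)"
    by (simp add: comult_def copairing_balanced monoidal_simps)
  also have "\<dots> = (i \<otimes> m) \<cdot> (i \<otimes> m \<otimes> i) \<cdot> (bb \<otimes> i \<otimes> i)"
    by (simp add: comp_assoc assoc[THEN precompose2])
  also have "\<dots> = (i \<otimes> m) \<cdot> (comult \<otimes> i)"
    by (simp add: comult_def copairing_balanced tensor_assoc[symmetric] interchange)
  finally show ?thesis by simp
qed

lemma comult_copairing: "(comult \<otimes> i) \<cdot> bb = (i \<otimes> comult) \<cdot> bb"
proof -
  have points: "(bb \<otimes> i \<otimes> i) \<cdot> bb = (i \<otimes> i \<otimes> bb) \<cdot> bb"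
    by (simp add: point_tensor_point tensor_assoc[symmetric] tensor_Id)
  have "(comult \<otimes> i) \<cdot> bb = (i \<otimes> m \<otimes> i) \<cdot> (bb \<otimes> i \<otimes> i) \<cdot> bb"
    by (simp add: comult_def copairing_balanced comp_assoc tensor_assoc[symmetric]
        interchange[THEN precompose2])
  also have "\<dots> = (i \<otimes> m \<otimes> i) \<cdot> (i \<otimes> i \<otimes> bb) \<cdot> bb"
    by (simp only: points)
  also have "\<dots> = (i \<otimes> comult) \<cdot> bb"
    by (simp add: comult_def interchange[THEN precompose2])
  finally show ?thesis .
qed

lemma comult_coassoc: "(comult \<otimes> i) \<cdot> comult = (i \<otimes> comult) \<cdot> comult"
proof -
  have slide: "(m \<otimes> i \<otimes> i) \<cdot> (i \<otimes> i \<otimes> comult) = (i \<otimes> comult) \<cdot> (m \<otimes> i)"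
    by (simp add: monoidal_simps)
  have "(comult \<otimes> i) \<cdot> comult = ((comult \<cdot> m) \<otimes> i) \<cdot> (i \<otimes> bb)"
    by (simp add: comult_def interchange[THEN precompose2])
  also have "\<dots> = (m \<otimes> i \<otimes> i) \<cdot> (i \<otimes> comult \<otimes> i) \<cdot> (i \<otimes> bb)"
    by (simp add: comult_mult_left comp_assoc tensor_assoc[symmetric] interchange[THEN precompose2])
  also have "\<dots> = (m \<otimes> i \<otimes> i) \<cdot> (i \<otimes> ((comult \<otimes> i) \<cdot> bb))"
    by (simp add: interchange)
  also have "\<dots> = (m \<otimes> i \<otimes> i) \<cdot> (i \<otimes> i \<otimes> comult) \<cdot> (i \<otimes> bb)"
    by (simp add: comult_copairing interchange)
  also have "\<dots> = (i \<otimes> comult) \<cdot> (m \<otimes> i) \<cdot> (i \<otimes> bb)"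
    by (simp add: comp_assoc slide[THEN precompose2])
  also have "\<dots> = (i \<otimes> comult) \<cdot> comult"
    by (simp add: comult_def comp_assoc)
  finally show ?thesis .
qed

lemma counit_left: "(counit \<otimes> i) \<cdot> comult = i"
proof -
  have "(counit \<otimes> i) \<cdot> comult = ((counit \<cdot> m) \<otimes> i) \<cdot> (i \<otimes> bb)"
    by (simp add: comult_def interchange[THEN precompose2])
  then show ?thesis
    by (simp add: counit_mult zigzag_right)
qed

lemma counit_right: "(i \<otimes> counit) \<cdot> comult = i"
proof -
  have "(i \<otimes> counit) \<cdot> comult = (i \<otimes> (counit \<cdot> m)) \<cdot> (bb \<otimes> i)"
    by (simp add: comult_def copairing_balanced interchange[THEN precompose2])
  then show ?thesis
    by (simp add: counit_mult zigzag_left)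
qed

lemma frobenius_algebra: "is_frobenius_algebra C X m u comult counit"
  unfolding is_frobenius_algebra_def is_comonoid_def
  using monoid comult_coassoc counit_left counit_right comult_mult_left comult_mult_right
  by (simp add: hom_def)

end

lemma frobenius_algebra_if_monoid_frobenius_form:
  assumes "strict_smc C" "is_monoid C X m u" "monoid_frobenius_form C X m u be"
  shows "\<exists>d c. is_frobenius_algebra C X m u d c"
proof -
  obtain bb where "hom C (Unit C) (OT C X X) bb" "zigzag C X be bb"
    using assms(3) unfolding monoid_frobenius_form_def zigzag_def by blast
  then interpret frobenius_form C X m u be bb
    using assms unfolding monoid_frobenius_form_def by unfold_locales auto
  show ?thesis using frobenius_algebra by blast
qed

locale integral_hopf = strict_symmetric_monoidal +
  fixes H mu eta delta eps s Lam lam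
  assumes integral_hopf: "is_integral_hopf C H mu eta delta eps s Lam lam"
begin

abbreviation i where "i \<equiv> Id C H"
abbreviation sig where "sig \<equiv> Sym C H H"

lemma hopf: "is_hopf C H mu eta delta eps s"
  using integral_hopf unfolding is_integral_hopf_def by blast

lemma obj_H [simp]: "Obj C H"
  using hopf unfolding is_hopf_def is_monoid_def by blast

lemma hom_structure:
  "hom C (OT C H H) H mu" "hom C (Unit C) H eta" "hom C H (OT C H H) delta" "hom C H (Unit C) eps"
  "hom C H H s" "hom C (Unit C) H Lam" "hom C H (Unit C) lam"
  using integral_hopf unfolding is_integral_hopf_def is_hopf_def is_monoid_def is_comonoid_def
    is_left_cointegral_def is_right_integral_def by blast+

lemma hopf_typing [simp]:
  "Arr C mu" "Dom C mu = OT C H H" "Cod C mu = H"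
  "Arr C eta" "Dom C eta = Unit C" "Cod C eta = H"
  "Arr C delta" "Dom C delta = H" "Cod C delta = OT C H H"
  "Arr C eps" "Dom C eps = H" "Cod C eps = Unit C"
  "Arr C s" "Dom C s = H" "Cod C s = H"
  "Arr C Lam" "Dom C Lam = Unit C" "Cod C Lam = H"
  "Arr C lam" "Dom C lam = H" "Cod C lam = Unit C"
  "Arr C sig" "Dom C sig = OT C H H" "Cod C sig = OT C H H"
  using hom_structure hom_Sym[of H H] by (simp_all add: hom_def)

lemma mu_assoc: "mu \<cdot> (mu \<otimes> i) = mu \<cdot> (i \<otimes> mu)"
  and mu_unit_left: "mu \<cdot> (eta \<otimes> i) = i" and mu_unit_right: "mu \<cdot> (i \<otimes> eta) = i"
  and delta_coassoc: "(delta \<otimes> i) \<cdot> delta = (i \<otimes> delta) \<cdot> delta"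
  and delta_counit_left: "(eps \<otimes> i) \<cdot> delta = i" and delta_counit_right: "(i \<otimes> eps) \<cdot> delta = i"
  and bialgebra: "delta \<cdot> mu = (mu \<otimes> mu) \<cdot> (i \<otimes> sig \<otimes> i) \<cdot> (delta \<otimes> delta)"
  and antipode_left: "mu \<cdot> (s \<otimes> i) \<cdot> delta = eta \<cdot> eps"
  and left_cointegral: "mu \<cdot> (Lam \<otimes> i) = Lam \<cdot> eps"
  and right_integral: "(i \<otimes> lam) \<cdot> delta = eta \<cdot> lam"
  and integral_normalized: "lam \<cdot> Lam = Id C (Unit C)"
  using integral_hopf
  unfolding is_integral_hopf_def is_hopf_def is_monoid_def is_comonoid_def
    is_left_cointegral_def is_right_integral_def by (simp_all add: tensor_assoc)

lemma right_integral_absorb: "mu \<cdot> (i \<otimes> i \<otimes> lam) \<cdot> (i \<otimes> delta) = i \<otimes> lam"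
proof -
  have "mu \<cdot> (i \<otimes> i \<otimes> lam) \<cdot> (i \<otimes> delta) = mu \<cdot> (i \<otimes> ((i \<otimes> lam) \<cdot> delta))"
    by (simp add: monoidal_simps)
  also have "\<dots> = mu \<cdot> (i \<otimes> eta) \<cdot> (i \<otimes> lam)"
    by (simp add: right_integral interchange)
  also have "\<dots> = i \<otimes> lam"
    by (simp add: mu_unit_right[THEN precompose2])
  finally show ?thesis .
qed

lemma antipode_coproduct: "(mu \<otimes> i) \<cdot> (s \<otimes> i \<otimes> i) \<cdot> (i \<otimes> delta) \<cdot> delta = eta \<otimes> i"
proof -
  have "(mu \<otimes> i) \<cdot> (s \<otimes> i \<otimes> i) \<cdot> (i \<otimes> delta) \<cdot> delta = ((mu \<cdot> (s \<otimes> i) \<cdot> delta) \<otimes> i) \<cdot> delta"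
    by (simp add: delta_coassoc[symmetric] monoidal_simps)
  also have "\<dots> = (eta \<otimes> i) \<cdot> (eps \<otimes> i) \<cdot> delta"
    by (simp add: antipode_left interchange[THEN precompose2])
  also have "\<dots> = eta \<otimes> i"
    by (simp add: delta_counit_left)
  finally show ?thesis .
qed

lemma zigzag_integral_expand:
  "(i \<otimes> (lam \<cdot> mu)) \<cdot> (((s \<otimes> i) \<cdot> delta \<cdot> Lam) \<otimes> i)
     = (i \<otimes> lam) \<cdot> (mu \<otimes> mu) \<cdot> (i \<otimes> sig \<otimes> i)
         \<cdot> (((mu \<otimes> i) \<cdot> (s \<otimes> i \<otimes> i) \<cdot> (i \<otimes> delta) \<cdot> delta \<cdot> Lam) \<otimes> i \<otimes> i) \<cdot> delta"
proof -
  have bialg: "(i \<otimes> delta) \<cdot> (i \<otimes> mu)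
      = (i \<otimes> mu \<otimes> mu) \<cdot> (i \<otimes> i \<otimes> sig \<otimes> i) \<cdot> (i \<otimes> delta \<otimes> delta)"
    by (simp add: bialgebra monoidal_simps)
  have assoc: "mu \<cdot> (i \<otimes> i \<otimes> lam) \<cdot> (i \<otimes> mu \<otimes> mu) = (i \<otimes> lam) \<cdot> (mu \<otimes> mu) \<cdot> (mu \<otimes> i \<otimes> i \<otimes> i)"
    by (simp add: mu_assoc monoidal_simps)
  have slide: "(mu \<otimes> i \<otimes> i \<otimes> i) \<cdot> (i \<otimes> i \<otimes> sig \<otimes> i) = (i \<otimes> sig \<otimes> i) \<cdot> (mu \<otimes> i \<otimes> i \<otimes> i)"
    by (simp add: monoidal_simps)
  have regroup: "(mu \<otimes> i \<otimes> i \<otimes> i) \<cdot> (i \<otimes> delta \<otimes> delta) \<cdot> (s \<otimes> i \<otimes> i) \<cdot> (delta \<otimes> i) \<cdot> (Lam \<otimes> i)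
      = (((mu \<otimes> i) \<cdot> (s \<otimes> i \<otimes> i) \<cdot> (i \<otimes> delta) \<cdot> delta \<cdot> Lam) \<otimes> i \<otimes> i) \<cdot> delta"
    by (simp add: monoidal_simps)
  have "(i \<otimes> (lam \<cdot> mu)) \<cdot> (((s \<otimes> i) \<cdot> delta \<cdot> Lam) \<otimes> i)
      = (i \<otimes> lam) \<cdot> (i \<otimes> mu) \<cdot> (s \<otimes> i \<otimes> i) \<cdot> (delta \<otimes> i) \<cdot> (Lam \<otimes> i)"
    by (simp add: monoidal_simps)
  also have "\<dots> = mu \<cdot> (i \<otimes> i \<otimes> lam) \<cdot> (i \<otimes> delta) \<cdot> (i \<otimes> mu) \<cdot> (s \<otimes> i \<otimes> i) \<cdot> (delta \<otimes> i)
      \<cdot> (Lam \<otimes> i)"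
    by (simp add: comp_assoc right_integral_absorb[THEN precompose3])
  also have "\<dots> = mu \<cdot> (i \<otimes> i \<otimes> lam) \<cdot> (i \<otimes> mu \<otimes> mu) \<cdot> (i \<otimes> i \<otimes> sig \<otimes> i) \<cdot> (i \<otimes> delta \<otimes> delta)
      \<cdot> (s \<otimes> i \<otimes> i) \<cdot> (delta \<otimes> i) \<cdot> (Lam \<otimes> i)"
    by (simp add: comp_assoc bialg[THEN precompose2])
  also have "\<dots> = (i \<otimes> lam) \<cdot> (mu \<otimes> mu) \<cdot> (mu \<otimes> i \<otimes> i \<otimes> i) \<cdot> (i \<otimes> i \<otimes> sig \<otimes> i) \<cdot> (i \<otimes> delta \<otimes> delta)
      \<cdot> (s \<otimes> i \<otimes> i) \<cdot> (delta \<otimes> i) \<cdot> (Lam \<otimes> i)"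
    by (simp add: comp_assoc assoc[THEN precompose3])
  also have "\<dots> = (i \<otimes> lam) \<cdot> (mu \<otimes> mu) \<cdot> (i \<otimes> sig \<otimes> i) \<cdot> (mu \<otimes> i \<otimes> i \<otimes> i) \<cdot> (i \<otimes> delta \<otimes> delta)
      \<cdot> (s \<otimes> i \<otimes> i) \<cdot> (delta \<otimes> i) \<cdot> (Lam \<otimes> i)"
    by (simp add: comp_assoc slide[THEN precompose2])
  also have "\<dots> = (i \<otimes> lam) \<cdot> (mu \<otimes> mu) \<cdot> (i \<otimes> sig \<otimes> i)
      \<cdot> (((mu \<otimes> i) \<cdot> (s \<otimes> i \<otimes> i) \<cdot> (i \<otimes> delta) \<cdot> delta \<cdot> Lam) \<otimes> i \<otimes> i) \<cdot> delta"
    by (simp only: regroup)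
  finally show ?thesis .
qed

lemma zigzag_integral: "(i \<otimes> (lam \<cdot> mu)) \<cdot> (((s \<otimes> i) \<cdot> delta \<cdot> Lam) \<otimes> i) = i"
proof -
  have unit_slide: "(i \<otimes> sig \<otimes> i) \<cdot> ((eta \<otimes> Lam) \<otimes> i \<otimes> i) = eta \<otimes> i \<otimes> Lam \<otimes> i"
    by (simp add: Sym_point monoidal_simps)
  have absorb: "(mu \<otimes> mu) \<cdot> (eta \<otimes> i \<otimes> Lam \<otimes> i) = i \<otimes> (Lam \<cdot> eps)"
    by (simp add: monoidal_simps mu_unit_left left_cointegral)
  have "(i \<otimes> (lam \<cdot> mu)) \<cdot> (((s \<otimes> i) \<cdot> delta \<cdot> Lam) \<otimes> i)
      = (i \<otimes> lam) \<cdot> (mu \<otimes> mu) \<cdot> (i \<otimes> sig \<otimes> i) \<cdot> ((eta \<otimes> Lam) \<otimes> i \<otimes> i) \<cdot> delta"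
    unfolding zigzag_integral_expand
    by (simp add: antipode_coproduct[THEN precompose4] point_tensor_comp)
  also have "\<dots> = (i \<otimes> lam) \<cdot> (mu \<otimes> mu) \<cdot> (eta \<otimes> i \<otimes> Lam \<otimes> i) \<cdot> delta"
    by (simp add: comp_assoc unit_slide[THEN precompose2])
  also have "\<dots> = (i \<otimes> lam) \<cdot> (i \<otimes> (Lam \<cdot> eps)) \<cdot> delta"
    by (simp add: comp_assoc absorb[THEN precompose2])
  also have "\<dots> = i"
    by (simp add: monoidal_simps integral_normalized[THEN precompose2] delta_counit_right)
  finally show ?thesis .
qed

lemma zigzag_integral_dual: "(i \<otimes> (lam \<cdot> mu \<cdot> (i \<otimes> s))) \<cdot> ((delta \<cdot> Lam) \<otimes> i) = i"
proof -
  interpret dual: integral_hopf "dual C" H delta eps mu eta s lam Lam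
    using strict_smc_dual is_integral_hopf_dual[OF integral_hopf] by unfold_locales
  show ?thesis using dual.zigzag_integral by (simp add: comp_assoc)
qed

lemma antipode_slide:
  "((lam \<cdot> mu \<cdot> (i \<otimes> s)) \<otimes> i) \<cdot> (i \<otimes> (delta \<cdot> Lam))
     = ((lam \<cdot> mu) \<otimes> i) \<cdot> (i \<otimes> ((s \<otimes> i) \<cdot> delta \<cdot> Lam))"
proof -
  have "(lam \<cdot> mu \<cdot> (i \<otimes> s)) \<otimes> i = ((lam \<cdot> mu) \<otimes> i) \<cdot> ((i \<otimes> s) \<otimes> i)"
    by (simp add: interchange comp_assoc)
  moreover have "((i \<otimes> s) \<otimes> i) \<cdot> (i \<otimes> (delta \<cdot> Lam)) = i \<otimes> ((s \<otimes> i) \<cdot> delta \<cdot> Lam)"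
    by (simp add: tensor_assoc interchange)
  ultimately show ?thesis
    by (simp add: comp_assoc)
qed

lemma hom_pairing: "hom C (OT C H H) (Unit C) (lam \<cdot> mu)"
  and hom_pairing_dual: "hom C (OT C H H) (Unit C) (lam \<cdot> mu \<cdot> (i \<otimes> s))"
  and hom_copairing: "hom C (Unit C) (OT C H H) ((s \<otimes> i) \<cdot> delta \<cdot> Lam)"
  and hom_copairing_dual: "hom C (Unit C) (OT C H H) (delta \<cdot> Lam)"
  by (simp_all add: hom_def)

lemma zigzag_iff_monoid_frobenius_form:
  "zigzag C H (lam \<cdot> mu) ((s \<otimes> i) \<cdot> delta \<cdot> Lam) \<longleftrightarrow> monoid_frobenius_form C H mu eta (lam \<cdot> mu)"
proof
  have "(lam \<cdot> mu) \<cdot> (mu \<otimes> i) = (lam \<cdot> mu) \<cdot> (i \<otimes> mu)"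
    by (simp add: comp_assoc mu_assoc)
  then show "zigzag C H (lam \<cdot> mu) ((s \<otimes> i) \<cdot> delta \<cdot> Lam) \<Longrightarrow> monoid_frobenius_form C H mu eta (lam \<cdot> mu)"
    unfolding monoid_frobenius_form_def zigzag_def using hom_pairing hom_copairing by blast
next
  assume "monoid_frobenius_form C H mu eta (lam \<cdot> mu)"
  then obtain bb where bb: "hom C (Unit C) (OT C H H) bb" "zigzag C H (lam \<cdot> mu) bb"
    unfolding monoid_frobenius_form_def zigzag_def by blast
  have "(s \<otimes> i) \<cdot> delta \<cdot> Lam = bb"
    using zigzag_unique[OF obj_H hom_pairing hom_copairing bb(1) zigzag_integral] bb(2)
    unfolding zigzag_def by blast
  then show "zigzag C H (lam \<cdot> mu) ((s \<otimes> i) \<cdot> delta \<cdot> Lam)"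
    using bb(2) by simp
qed

lemma monoid_frobenius_form_iff_comonoid_frobenius_form:
  "monoid_frobenius_form C H mu eta (lam \<cdot> mu) \<longleftrightarrow> comonoid_frobenius_form C H delta eps (delta \<cdot> Lam)"
proof
  assume "monoid_frobenius_form C H mu eta (lam \<cdot> mu)"
  then have "((lam \<cdot> mu) \<otimes> i) \<cdot> (i \<otimes> ((s \<otimes> i) \<cdot> delta \<cdot> Lam)) = i"
    unfolding zigzag_iff_monoid_frobenius_form[symmetric] zigzag_def by blast
  then have "zigzag C H (lam \<cdot> mu \<cdot> (i \<otimes> s)) (delta \<cdot> Lam)"
    unfolding zigzag_def antipode_slide[symmetric] using zigzag_integral_dual by blast
  moreover have "(delta \<otimes> i) \<cdot> delta \<cdot> Lam = (i \<otimes> delta) \<cdot> delta \<cdot> Lam"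
    by (simp add: comp_assoc[symmetric] delta_coassoc)
  ultimately show "comonoid_frobenius_form C H delta eps (delta \<cdot> Lam)"
    unfolding comonoid_frobenius_form_def zigzag_def using hom_pairing_dual hom_copairing_dual by blast
next
  assume "comonoid_frobenius_form C H delta eps (delta \<cdot> Lam)"
  then obtain g where g: "hom C (OT C H H) (Unit C) g" "zigzag C H g (delta \<cdot> Lam)"
    unfolding comonoid_frobenius_form_def zigzag_def by blast
  have "lam \<cdot> mu \<cdot> (i \<otimes> s) = g"
    using zigzag_unique_dual[OF obj_H hom_copairing_dual hom_pairing_dual g(1) zigzag_integral_dual] g(2)
    unfolding zigzag_def by blast
  then have "((lam \<cdot> mu) \<otimes> i) \<cdot> (i \<otimes> ((s \<otimes> i) \<cdot> delta \<cdot> Lam)) = i"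
    using g(2) unfolding zigzag_def antipode_slide[symmetric] by simp
  then show "monoid_frobenius_form C H mu eta (lam \<cdot> mu)"
    unfolding zigzag_iff_monoid_frobenius_form[symmetric] zigzag_def using zigzag_integral by blast
qed

lemma pre_hopf_frobenius_if_monoid_frobenius_form:
  assumes "monoid_frobenius_form C H mu eta (lam \<cdot> mu)"
  shows "\<exists>delta_g eps_g mu_r eta_r. is_pre_hopf_frobenius C H mu eta delta_g eps_g mu_r eta_r delta eps s"
proof -
  have monoid: "is_monoid C H mu eta" and comonoid: "is_comonoid C H delta eps"
    using hopf unfolding is_hopf_def by simp_all
  obtain delta_g eps_g where green: "is_frobenius_algebra C H mu eta delta_g eps_g"
    using frobenius_algebra_if_monoid_frobenius_form[OF strict_smc monoid assms] by blast
  have "is_monoid (dual C) H delta eps"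
    using comonoid by (simp add: is_monoid_dual)
  moreover have "monoid_frobenius_form (dual C) H delta eps (delta \<cdot> Lam)"
    using assms
    by (simp add: monoid_frobenius_form_dual monoid_frobenius_form_iff_comonoid_frobenius_form[symmetric])
  ultimately obtain mu_r eta_r where "is_frobenius_algebra (dual C) H delta eps mu_r eta_r"
    using frobenius_algebra_if_monoid_frobenius_form[OF strict_smc_dual] by blast
  then have red: "is_frobenius_algebra C H mu_r eta_r delta eps"
    by (simp add: is_frobenius_algebra_dual)
  show ?thesis
    using green red hopf unfolding is_pre_hopf_frobenius_def by blast
qed

end

theorem mainTheorem3:
  fixes C :: "('o, 'm, 'z) smc_scheme"
  assumes "strict_smc C"
    and "is_integral_hopf C H mu eta delta eps s Lam lam"
  defines "\<beta> \<equiv> Comp C lam mu"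
    and "\<gamma> \<equiv> Comp C (MT C s (Id C H)) (Comp C delta Lam)"
    and "\<gamma>' \<equiv> Comp C delta Lam"
  shows "let nondeg =
           (Comp C (MT C (Id C H) \<beta>) (MT C \<gamma> (Id C H)) = Id C H \<and>
            Comp C (MT C \<beta> (Id C H)) (MT C (Id C H) \<gamma>) = Id C H)
         in (nondeg \<longleftrightarrow> monoid_frobenius_form C H mu eta \<beta>) \<and>
            (monoid_frobenius_form C H mu eta \<beta> \<longleftrightarrow> comonoid_frobenius_form C H delta eps \<gamma>') \<and>
            (nondeg \<longrightarrow> (\<exists>delta_g eps_g mu_r eta_r.
                is_pre_hopf_frobenius C H mu eta delta_g eps_g mu_r eta_r delta eps s))"
proof -
  interpret integral_hopf C H mu eta delta eps s Lam lam
    using assms(1,2) by unfold_locales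
  show ?thesis
    unfolding Let_def \<beta>_def \<gamma>_def \<gamma>'_def zigzag_def[symmetric]
    using zigzag_iff_monoid_frobenius_form monoid_frobenius_form_iff_comonoid_frobenius_form
      pre_hopf_frobenius_if_monoid_frobenius_form
    by blast
qed

end
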